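(* Let $v$ be a game on $N$ with $n=|N|$, let $i\in N$, and let $v_i$ be the component game (the unique $v_i\in\ell^2(V)$ with $v_i(\emptyset)=0$ and $\mathrm{d}v_i=P\mathrm{d}_iv$). Define $u_i\in\ell^2(V)$ by, for each $S\subset N\setminus\{i\}$, $$u_i(S\cup\{i\}) = \frac{1}{n2^n}\sum_{T\subset N\setminus\{i\}} \frac{\binom{n}{|S\triangle T|+1}+\binom{n}{|S\triangle T|+2}+\cdots+\binom{n}{n}}{\binom{n-1}{|S\triangle T|}}\bigl(v(T\cup\{i\})-v(T)\bigr),$$ and $u_i(S) = -u_i(S\cup\{i\})$, where $S\triangle T=(S\cup T)\setminus(S\cap T)$. Then $v_i = u_i - u_i(\emptyset)$. In particular, $$u_i(\emptyset) = -\frac{1}{n2^n}\sum_{T\subset N\setminus\{i\}}\frac{\binom{n}{|T|+1}+\cdots+\binom{n}{n}}{\binom{n-1}{|T|}}\bigl(v(T\cup\{i\})-v(T)\bigr).$$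
   Context: Let $N$ be a finite set of players. A game is a function $v\colon 2^N\to\mathbb{R}$ with $v(\emptyset)=0$. The hypercube graph $G=(V,E)$ has $V=2^N$ and oriented edges $E=\{(S,S\cup\{i\}) : i\in N,\ S\subset N\setminus\{i\}\}$. $\ell^2(V)$ and $\ell^2(E)$ are the spaces of real functions on $V$ and $E$ with the standard inner products $\sum_{S}u(S)w(S)$ and $\sum_{e}f(e)g(e)$. $\mathrm{d}\colon \ell^2(V)\to\ell^2(E)$ is $\mathrm{d}u(S,S\cup\{i\}) = u(S\cup\{i\})-u(S)$. For $i\in N$, $\mathrm{d}_i\colon\ell^2(V)\to\ell^2(E)$ is defined by $\mathrm{d}_i u(S,S\cup\{j\}) = u(S\cup\{i\})-u(S)$ if $j=i$ and $0$ if $j\ne i$. $P$ is the orthogonal projection of $\ell^2(E)$ onto the range $\mathcal{R}(\mathrm{d})$. *)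

theory Defs
  imports Complex_Main
begin

text \<open>An oriented edge (S, S \<union> {i}) is
  encoded as the pair (S, i) with i \<in> N and S \<subseteq> N - {i}.
  Elements of l2(V) are functions 'a set \<Rightarrow> real (only values on Pow N matter),
  elements of l2(E) are functions 'a set \<times> 'a \<Rightarrow> real (only values on hc_edges N matter).\<close>

definition hc_edges :: "'a set \<Rightarrow> ('a set \<times> 'a) set" where
  "hc_edges N = {(S, i). i \<in> N \<and> S \<subseteq> N - {i}}"

definition grad :: "('a set \<Rightarrow> real) \<Rightarrow> ('a set \<times> 'a) \<Rightarrow> real" where
  "grad u = (\<lambda>(S, j). u (insert j S) - u S)"

definition grad_i :: "'a \<Rightarrow> ('a set \<Rightarrow> real) \<Rightarrow> ('a set \<times> 'a) \<Rightarrow> real" where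
  "grad_i i u = (\<lambda>(S, j). if j = i then u (insert i S) - u S else 0)"

definition inner_E :: "'a set \<Rightarrow> (('a set \<times> 'a) \<Rightarrow> real) \<Rightarrow> (('a set \<times> 'a) \<Rightarrow> real) \<Rightarrow> real" where
  "inner_E N f g = (\<Sum>e\<in>hc_edges N. f e * g e)"

definition is_proj_range_d :: "'a set \<Rightarrow> (('a set \<times> 'a) \<Rightarrow> real) \<Rightarrow> (('a set \<times> 'a) \<Rightarrow> real) \<Rightarrow> bool" where
  "is_proj_range_d N f g \<longleftrightarrow>
     (\<exists>u. \<forall>e\<in>hc_edges N. g e = grad u e) \<and>
     (\<forall>u. inner_E N (\<lambda>e. f e - g e) (grad u) = 0)"

definition is_component_game :: "'a set \<Rightarrow> ('a set \<Rightarrow> real) \<Rightarrow> 'a \<Rightarrow> ('a set \<Rightarrow> real) \<Rightarrow> bool" where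
  "is_component_game N v i w \<longleftrightarrow> w {} = 0 \<and> is_proj_range_d N (grad_i i v) (grad w)"

definition symdiff :: "'a set \<Rightarrow> 'a set \<Rightarrow> 'a set" where
  "symdiff S T = (S \<union> T) - (S \<inter> T)"

definition u_top :: "'a set \<Rightarrow> ('a set \<Rightarrow> real) \<Rightarrow> 'a \<Rightarrow> 'a set \<Rightarrow> real" where
  "u_top N v i S =
     1 / (real (card N) * 2 ^ card N) *
     (\<Sum>T\<in>Pow (N - {i}).
        (\<Sum>k = card (symdiff S T) + 1..card N. real (card N choose k))
          / real ((card N - 1) choose card (symdiff S T))
        * (v (insert i T) - v T))"

definition u_fn :: "'a set \<Rightarrow> ('a set \<Rightarrow> real) \<Rightarrow> 'a \<Rightarrow> 'a set \<Rightarrow> real" where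
  "u_fn N v i X = (if i \<in> X then u_top N v i (X - {i}) else - u_top N v i X)"

end

theory Submission imports Defs begin

text \<open>Writing M = N - {i}, the candidate u = u_fn N v i is odd under toggling i, so testing the
  residual d_i v - d u against an arbitrary gradient d\<phi> and summing by parts along the directions
  j \<in> M turns the orthogonality condition into the discrete Poisson equation
  (|M| + 2) f(S) - (\<Sum>j\<in>M. f(symdiff S {j})) = v(S \<union> {i}) - v(S) on the subsets of M, where
  f(S) = u(S \<union> {i}). The function f is the convolution of the marginal contributions with the
  radial kernel K(d) = (\<Sum>k>d. n choose k) / (n - 1 choose d), so the Poisson equation reduces
  to a three-term recurrence for K at a single distance d, which in turn follows from the
  recurrence of binomial tails.
  Finally, two potentials whose residuals are both orthogonal to the range of d have a gradient
  difference orthogonal to itself, hence differ by a constant.\<close>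

lemma sum_Pow_insert:
  assumes "finite A" "a \<notin> A"
  shows "(\<Sum>S\<in>Pow (insert a A). F S) = (\<Sum>T\<in>Pow A. F T + F (insert a T))"
proof -
  have inj: "inj_on (insert a) (Pow A)"
    using assms(2) unfolding inj_on_def by (metis PowD insert_ident subset_iff)
  have disj: "Pow A \<inter> insert a ` Pow A = {}" using assms(2) by blast
  have "(\<Sum>S\<in>Pow (insert a A). F S)
      = (\<Sum>S\<in>Pow A. F S) + (\<Sum>S\<in>insert a ` Pow A. F S)"
    unfolding Pow_insert using assms(1) disj by (intro sum.union_disjoint) auto
  also have "(\<Sum>S\<in>insert a ` Pow A. F S) = (\<Sum>T\<in>Pow A. F (insert a T))"
    using inj by (simp add: sum.reindex)
  finally show ?thesis by (simp add: sum.distrib)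
qed

lemma finite_hc_edges: "finite N \<Longrightarrow> finite (hc_edges N)"
  by (rule finite_subset[of _ "Pow N \<times> N"]) (auto simp: hc_edges_def)

lemma inner_E_eq_sum_directions:
  assumes "finite N"
  shows "inner_E N h k = (\<Sum>j\<in>N. \<Sum>S\<in>Pow (N - {j}). h (S, j) * k (S, j))"
proof -
  have eq: "hc_edges N = (\<lambda>(j, S). (S, j)) ` Sigma N (\<lambda>j. Pow (N - {j}))"
    unfolding hc_edges_def by force
  have inj: "inj_on (\<lambda>(j, S). (S, j)) (Sigma N (\<lambda>j. Pow (N - {j})))"
    unfolding inj_on_def by auto
  have "inner_E N h k = (\<Sum>(j, S)\<in>Sigma N (\<lambda>j. Pow (N - {j})). h (S, j) * k (S, j))"
    unfolding inner_E_def eq using inj by (simp add: sum.reindex case_prod_unfold)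
  also have "\<dots> = (\<Sum>j\<in>N. \<Sum>S\<in>Pow (N - {j}). h (S, j) * k (S, j))"
    using assms by (subst sum.Sigma) auto
  finally show ?thesis .
qed

lemma inner_E_insert:
  assumes "finite M" "i \<notin> M"
  shows "inner_E (insert i M) h k =
           (\<Sum>T\<in>Pow M. h (T, i) * k (T, i)) +
           (\<Sum>j\<in>M. \<Sum>T\<in>Pow (M - {j}).
              h (T, j) * k (T, j) + h (insert i T, j) * k (insert i T, j))"
proof -
  have "insert i M - {j} = insert i (M - {j})" if "j \<in> M" for j
    using that assms(2) by auto
  then have "(\<Sum>S\<in>Pow (insert i M - {j}). h (S, j) * k (S, j)) =
      (\<Sum>T\<in>Pow (M - {j}). h (T, j) * k (T, j) + h (insert i T, j) * k (insert i T, j))"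
    if "j \<in> M" for j
    using that assms by (simp add: sum_Pow_insert)
  moreover have "insert i M - {i} = M" using assms(2) by auto
  ultimately show ?thesis
    using assms by (simp add: inner_E_eq_sum_directions)
qed

lemma inner_E_self_eq_0_imp_zero:
  assumes "finite N" "inner_E N f f = 0"
  shows "\<forall>e\<in>hc_edges N. f e = 0"
  using assms sum_nonneg_eq_0_iff[of "hc_edges N" "\<lambda>e. f e * f e"]
  by (simp add: inner_E_def finite_hc_edges)

lemma grad_zero_imp_const:
  assumes "finite S" "S \<subseteq> N" "\<forall>e\<in>hc_edges N. grad z e = 0"
  shows "z S = z {}"
  using assms(1,2)
proof (induction S rule: finite_induct)
  case (insert x S)
  then have "(S, x) \<in> hc_edges N" unfolding hc_edges_def by auto
  with assms(3) insert show ?case unfolding grad_def by auto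
qed simp

lemma orthogonal_residuals_imp_diff_const:
  assumes "finite N"
    and w: "\<And>\<phi>. inner_E N (\<lambda>e. f e - grad w e) (grad \<phi>) = 0"
    and u: "\<And>\<phi>. inner_E N (\<lambda>e. f e - grad u e) (grad \<phi>) = 0"
    and "S \<subseteq> N"
  shows "w S - u S = w {} - u {}"
proof -
  define z where "z X = w X - u X" for X
  have grad_z: "grad z e = grad w e - grad u e" for e
    unfolding z_def grad_def by (simp add: case_prod_unfold)
  have "inner_E N (grad z) (grad z) =
          inner_E N (\<lambda>e. f e - grad u e) (grad z)
          - inner_E N (\<lambda>e. f e - grad w e) (grad z)"
    unfolding inner_E_def grad_z by (simp add: sum_subtractf[symmetric] algebra_simps)
  then have "inner_E N (grad z) (grad z) = 0" using u w by simp
  then have "z S = z {}"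
    using assms(1,4) finite_subset inner_E_self_eq_0_imp_zero grad_zero_imp_const by metis
  then show ?thesis unfolding z_def .
qed

lemma summation_by_parts_Pow:
  fixes F P :: "'a set \<Rightarrow> real"
  assumes "finite M"
  shows "(\<Sum>j\<in>M. \<Sum>T\<in>Pow (M - {j}). (F (insert j T) - F T) * (P (insert j T) - P T))
       = - (\<Sum>T\<in>Pow M. P T * (\<Sum>j\<in>M. F (symdiff T {j}) - F T))"
proof -
  have "(\<Sum>T\<in>Pow M. P T * (F (symdiff T {j}) - F T))
      = - (\<Sum>T\<in>Pow (M - {j}). (F (insert j T) - F T) * (P (insert j T) - P T))"
    if j: "j \<in> M" for j
  proof -
    have M: "M = insert j (M - {j})" using j by blast
    have "symdiff T {j} = insert j T" "symdiff (insert j T) {j} = T"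
      if "T \<in> Pow (M - {j})" for T
      using that unfolding symdiff_def by auto
    then have "(\<Sum>T\<in>Pow M. P T * (F (symdiff T {j}) - F T))
        = (\<Sum>T\<in>Pow (M - {j}). - ((F (insert j T) - F T) * (P (insert j T) - P T)))"
      using assms by (subst M, subst sum_Pow_insert) (auto simp: algebra_simps intro!: sum.cong)
    then show ?thesis by (simp add: sum_negf)
  qed
  then have "(\<Sum>j\<in>M. \<Sum>T\<in>Pow M. P T * (F (symdiff T {j}) - F T))
      = - (\<Sum>j\<in>M. \<Sum>T\<in>Pow (M - {j}).
             (F (insert j T) - F T) * (P (insert j T) - P T))"
    by (simp add: sum_negf)
  then show ?thesis
    by (simp add: sum_distrib_left sum.swap[of _ M "Pow M"])
qed

definition binom_tail :: "nat \<Rightarrow> nat \<Rightarrow> real" where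
  "binom_tail n k = (\<Sum>l = k + 1..n. real (n choose l))"

definition tail_kernel :: "nat \<Rightarrow> nat \<Rightarrow> real" where
  "tail_kernel n k = binom_tail n k / real ((n - 1) choose k)"

lemma binom_tail_eq:
  "k < n \<Longrightarrow> binom_tail n k = real (n choose Suc k) + binom_tail n (Suc k)"
  unfolding binom_tail_def by (simp add: sum.atLeast_Suc_atMost)

lemma binom_tail_eq_0: "n \<le> k \<Longrightarrow> binom_tail n k = 0"
  unfolding binom_tail_def by simp

lemma binom_tail_0: "binom_tail n 0 = 2 ^ n - 1"
proof -
  have "(\<Sum>l\<le>n. real (n choose l)) = 2 ^ n"
    using choose_row_sum[of n] by (metis of_nat_numeral of_nat_power of_nat_sum)
  moreover have "(\<Sum>l\<le>n. real (n choose l)) = 1 + (\<Sum>l = 1..n. real (n choose l))"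
    by (simp add: atMost_atLeast0 sum.atLeast_Suc_atMost)
  ultimately show ?thesis unfolding binom_tail_def by simp
qed

lemma Suc_mult_choose_Suc: "real (Suc k) * real (m choose Suc k) = real (m - k) * real (m choose k)"
proof -
  have "Suc k * (m choose Suc k) = (m - k) * (m choose k)"
    using binomial_absorption[of k m] binomial_absorb_comp[of m k] by simp
  then show ?thesis by (metis of_nat_mult)
qed

lemma of_nat_divide_choose_pred:
  assumes "0 < d" "d \<le> m"
  shows "real d / real (m choose (d - 1)) = real (Suc m - d) / real (m choose d)"
proof -
  have "real d * real (m choose d) = real (Suc m - d) * real (m choose (d - 1))"
    using Suc_mult_choose_Suc[of "d - 1" m] assms by (simp add: Suc_diff_le)
  moreover have "real (m choose d) > 0" "real (m choose (d - 1)) > 0" using assms by auto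
  ultimately show ?thesis by (simp add: frac_eq_eq)
qed

lemma binom_tail_recurrence:
  assumes "0 < d" "d < n"
  shows "(real n + 1) * binom_tail n d
           = real (n - d) * binom_tail n (d - 1) + real (Suc d) * binom_tail n (Suc d)"
proof -
  have "binom_tail n (d - 1) = real (n choose d) + binom_tail n d"
    using binom_tail_eq[of "d - 1" n] assms by simp
  moreover have "binom_tail n d = real (n choose Suc d) + binom_tail n (Suc d)"
    using binom_tail_eq assms(2) .
  moreover have "real (n - d) = real n - real d" using assms(2) by simp
  ultimately show ?thesis using Suc_mult_choose_Suc[of d n] by (simp add: algebra_simps)
qed

lemma tail_kernel_equation:
  assumes "0 < n" "d < n"
  shows "(real n + 1) * tail_kernel n d - real d * tail_kernel n (d - 1)
           - real (n - 1 - d) * tail_kernel n (Suc d)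
         = (if d = 0 then real n * 2 ^ n else 0)"
proof (cases "d = 0")
  case True
  have "real (n - 1) * tail_kernel n 1 = binom_tail n 1"
    using binom_tail_eq_0[of n 1] by (cases "n = 1") (simp_all add: tail_kernel_def)
  then show ?thesis
    using True assms binom_tail_eq[of 0 n] binom_tail_0[of n]
    by (simp add: tail_kernel_def algebra_simps)
next
  case False
  define C where "C = real ((n - 1) choose d)"
  have C: "C > 0" using assms unfolding C_def by simp
  have "real d * tail_kernel n (d - 1)
      = real d / real ((n - 1) choose (d - 1)) * binom_tail n (d - 1)"
    by (simp add: tail_kernel_def)
  also have "\<dots> = real (n - d) * binom_tail n (d - 1) / C"
    using of_nat_divide_choose_pred[of d "n - 1"] False assms by (simp add: C_def Suc_diff_le)
  finally have lower: "real d * tail_kernel n (d - 1) = real (n - d) * binom_tail n (d - 1) / C" .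
  have upper: "real (n - 1 - d) * tail_kernel n (Suc d) = real (Suc d) * binom_tail n (Suc d) / C"
  proof (cases "Suc d = n")
    case True
    then show ?thesis by (simp add: binom_tail_eq_0)
  next
    case False
    have "real (n - 1 - d) * tail_kernel n (Suc d)
        = real (n - 1 - d) / real ((n - 1) choose Suc d) * binom_tail n (Suc d)"
      by (simp add: tail_kernel_def)
    also have "real (n - 1 - d) / real ((n - 1) choose Suc d) = real (Suc d) / C"
      using of_nat_divide_choose_pred[of "Suc d" "n - 1"] False assms by (simp add: C_def)
    finally show ?thesis by simp
  qed
  have "tail_kernel n d = binom_tail n d / C" by (simp add: tail_kernel_def C_def)
  then have "(real n + 1) * tail_kernel n d - real d * tail_kernel n (d - 1)
        - real (n - 1 - d) * tail_kernel n (Suc d)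
      = ((real n + 1) * binom_tail n d - real (n - d) * binom_tail n (d - 1)
          - real (Suc d) * binom_tail n (Suc d)) / C"
    by (simp only: lower upper diff_divide_distrib times_divide_eq_right)
  then show ?thesis using binom_tail_recurrence[of d n] False assms by simp
qed

lemma sum_card_symdiff_singleton:
  assumes "finite M" "D \<subseteq> M"
  shows "(\<Sum>j\<in>M. K (card (symdiff D {j}))) =
         real (card D) * K (card D - 1) + real (card M - card D) * K (Suc (card D))"
proof -
  have fD: "finite D" using assms finite_subset by blast
  have "symdiff D {j} = D - {j}" if "j \<in> D" for j
    using that unfolding symdiff_def by auto
  then have "(\<Sum>j\<in>D. K (card (symdiff D {j}))) = (\<Sum>j\<in>D. K (card D - 1))"
    using fD by simp
  moreover have "symdiff D {j} = insert j D" "j \<notin> D" if "j \<in> M - D" for j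
    using that unfolding symdiff_def by auto
  then have "(\<Sum>j\<in>M - D. K (card (symdiff D {j}))) = (\<Sum>j\<in>M - D. K (Suc (card D)))"
    using fD by simp
  moreover have "(\<Sum>j\<in>M. K (card (symdiff D {j}))) =
        (\<Sum>j\<in>M - D. K (card (symdiff D {j}))) + (\<Sum>j\<in>D. K (card (symdiff D {j})))"
    by (rule sum.subset_diff[OF assms(2,1)])
  ultimately show ?thesis using assms by (simp add: card_Diff_subset fD)
qed

lemma radial_convolution_solves_poisson:
  fixes K :: "nat \<Rightarrow> real" and g :: "'a set \<Rightarrow> real"
  assumes fin: "finite M" and S: "S \<subseteq> M"
    and K: "\<And>d. d \<le> card M \<Longrightarrow>
      (real (card M) + 2) * K d - real d * K (d - 1) - real (card M - d) * K (Suc d)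
        = (if d = 0 then 1 else 0)"
  defines "f X \<equiv> \<Sum>T\<in>Pow M. K (card (symdiff X T)) * g T"
  shows "(real (card M) + 2) * f S - (\<Sum>j\<in>M. f (symdiff S {j})) = g S"
proof -
  define D where "D T = symdiff S T" for T
  have D_sub: "D T \<subseteq> M" if "T \<in> Pow M" for T
    using that S unfolding D_def symdiff_def by auto
  have "symdiff (symdiff S {j}) T = symdiff (D T) {j}" for j T
    unfolding D_def symdiff_def by auto
  then have "(\<Sum>j\<in>M. f (symdiff S {j}))
      = (\<Sum>T\<in>Pow M. g T * (\<Sum>j\<in>M. K (card (symdiff (D T) {j}))))"
    unfolding f_def by (simp add: sum_distrib_left sum.swap[of _ M] mult.commute)
  also have "\<dots> = (\<Sum>T\<in>Pow M. g T * (real (card (D T)) * K (card (D T) - 1)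
        + real (card M - card (D T)) * K (Suc (card (D T)))))"
    using sum_card_symdiff_singleton[OF fin D_sub] by simp
  finally have "(real (card M) + 2) * f S - (\<Sum>j\<in>M. f (symdiff S {j}))
      = (\<Sum>T\<in>Pow M. g T * ((real (card M) + 2) * K (card (D T))
           - real (card (D T)) * K (card (D T) - 1)
           - real (card M - card (D T)) * K (Suc (card (D T)))))"
    unfolding f_def D_def by (simp add: sum_distrib_left sum_subtractf[symmetric] algebra_simps)
  also have "\<dots> = (\<Sum>T\<in>Pow M. g T * (if T = S then 1 else 0))"
  proof (intro sum.cong refl arg_cong[where f = "\<lambda>x. g _ * x"])
    fix T assume T: "T \<in> Pow M"
    have "finite (D T)" using D_sub[OF T] fin finite_subset by blast
    then have "card (D T) = 0 \<longleftrightarrow> T = S" unfolding D_def symdiff_def by auto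
    moreover have "card (D T) \<le> card M" using card_mono[OF fin D_sub[OF T]] .
    ultimately show "(real (card M) + 2) * K (card (D T)) - real (card (D T)) * K (card (D T) - 1)
        - real (card M - card (D T)) * K (Suc (card (D T))) = (if T = S then 1 else 0)"
      using K by simp
  qed
  also have "\<dots> = g S" using S fin by (simp add: if_distrib sum.delta' cong: if_cong)
  finally show ?thesis .
qed

lemma u_top_solves_poisson:
  assumes fin: "finite N" and i: "i \<in> N" and S: "S \<subseteq> N - {i}"
  shows "(real (card (N - {i})) + 2) * u_top N v i S
         - (\<Sum>j\<in>N - {i}. u_top N v i (symdiff S {j})) = v (insert i S) - v S"
proof -
  define n where "n = card N"
  define K where "K d = tail_kernel n d / (real n * 2 ^ n)" for d
  have n: "0 < n" using fin i unfolding n_def by (auto simp: card_gt_0_iff)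
  have card_M: "card (N - {i}) = n - 1" using fin i unfolding n_def by simp
  have u_top: "u_top N v i X =
      (\<Sum>T\<in>Pow (N - {i}). K (card (symdiff X T)) * (v (insert i T) - v T))" for X
    unfolding u_top_def K_def tail_kernel_def binom_tail_def n_def sum_distrib_left
    by (intro sum.cong refl) simp
  have "(real (card (N - {i})) + 2) * K d - real d * K (d - 1)
          - real (card (N - {i}) - d) * K (Suc d) = (if d = 0 then 1 else 0)"
    if "d \<le> card (N - {i})" for d
  proof -
    have d: "d < n" using that n card_M by simp
    have "real (n - 1) + 2 = real n + 1" using n by simp
    then have "(real (card (N - {i})) + 2) * K d - real d * K (d - 1)
          - real (card (N - {i}) - d) * K (Suc d)
        = ((real n + 1) * tail_kernel n d - real d * tail_kernel n (d - 1)
          - real (n - 1 - d) * tail_kernel n (Suc d)) / (real n * 2 ^ n)"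
      unfolding K_def card_M by (simp only: diff_divide_distrib times_divide_eq_right)
    then show ?thesis using tail_kernel_equation[OF n d] n by simp
  qed
  from radial_convolution_solves_poisson[OF _ S this, of "\<lambda>T. v (insert i T) - v T"] fin
  show ?thesis unfolding u_top by simp
qed

lemma u_fn_residual_orthogonal:
  assumes fin: "finite N" and i: "i \<in> N"
  shows "inner_E N (\<lambda>e. grad_i i v e - grad (u_fn N v i) e) (grad \<phi>) = 0"
proof -
  define M where "M = N - {i}"
  define f where "f = u_top N v i"
  define h where "h e = grad_i i v e - grad (u_fn N v i) e" for e
  define \<psi> where "\<psi> T = \<phi> (insert i T) - \<phi> T" for T
  define g where "g T = v (insert i T) - v T" for T
  have fin_M: "finite M" and i_M: "i \<notin> M" and N: "N = insert i M"
    using fin i unfolding M_def by auto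
  have u_fn: "u_fn N v i (insert i T) = f T" "u_fn N v i T = - f T" if "i \<notin> T" for T
    using that unfolding u_fn_def f_def by auto
  have "(\<Sum>T\<in>Pow M. h (T, i) * grad \<phi> (T, i))
      = (\<Sum>T\<in>Pow M. \<psi> T * (g T - 2 * f T))"
  proof (intro sum.cong refl)
    fix T assume "T \<in> Pow M"
    then have "i \<notin> T" using i_M by auto
    then show "h (T, i) * grad \<phi> (T, i) = \<psi> T * (g T - 2 * f T)"
      by (simp add: h_def grad_i_def grad_def \<psi>_def g_def u_fn algebra_simps)
  qed
  \<comment> \<open>Edges in a direction j \<noteq> i come in pairs across coordinate i; as u_fn is odd in i,
    the residual on such a pair is - d f, and the pair contributes a product of gradients on Pow M.\<close>
  moreover have "(\<Sum>T\<in>Pow (M - {j}). h (T, j) * grad \<phi> (T, j)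
        + h (insert i T, j) * grad \<phi> (insert i T, j))
      = - (\<Sum>T\<in>Pow (M - {j}). (f (insert j T) - f T) * (\<psi> (insert j T) - \<psi> T))"
    if j: "j \<in> M" for j
  proof -
    have "h (T, j) * grad \<phi> (T, j) + h (insert i T, j) * grad \<phi> (insert i T, j)
        = - ((f (insert j T) - f T) * (\<psi> (insert j T) - \<psi> T))"
      if "T \<in> Pow (M - {j})" for T
    proof -
      have "i \<notin> T" "i \<notin> insert j T" "j \<noteq> i" using that j i_M by auto
      moreover have "insert j (insert i T) = insert i (insert j T)" by auto
      ultimately show ?thesis
        by (simp add: h_def grad_i_def grad_def \<psi>_def u_fn algebra_simps)
    qed
    then show ?thesis by (simp add: sum_negf[symmetric])
  qed
  ultimately have "inner_E N h (grad \<phi>)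
      = (\<Sum>T\<in>Pow M. \<psi> T * (g T - 2 * f T))
        + (\<Sum>T\<in>Pow M. \<psi> T * (\<Sum>j\<in>M. f (symdiff T {j}) - f T))"
    using summation_by_parts_Pow[OF fin_M, of f \<psi>]
    unfolding N inner_E_insert[OF fin_M i_M] by (simp add: sum_negf)
  also have "\<dots> = (\<Sum>T\<in>Pow M. \<psi> T *
      (g T - ((real (card M) + 2) * f T - (\<Sum>j\<in>M. f (symdiff T {j})))))"
    by (simp add: sum.distrib sum_subtractf algebra_simps)
  also have "\<dots> = 0"
    using u_top_solves_poisson[OF fin i] unfolding M_def f_def g_def by simp
  finally show ?thesis unfolding h_def .
qed

theorem theorem3p9:
  fixes N :: "'a set" and v :: "'a set \<Rightarrow> real" and i :: 'a and w :: "'a set \<Rightarrow> real"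
  assumes "finite N" and "v {} = 0" and "i \<in> N"
    and "is_component_game N v i w"
  shows "(\<forall>S\<in>Pow N. w S = u_fn N v i S - u_fn N v i {}) \<and>
         u_fn N v i {} =
           - (1 / (real (card N) * 2 ^ card N) *
              (\<Sum>T\<in>Pow (N - {i}).
                 (\<Sum>k = card T + 1..card N. real (card N choose k))
                   / real ((card N - 1) choose card T)
                 * (v (insert i T) - v T)))"
proof
  have w: "w {} = 0"
    "\<And>\<phi>. inner_E N (\<lambda>e. grad_i i v e - grad w e) (grad \<phi>) = 0"
    using assms(4) unfolding is_component_game_def is_proj_range_d_def by auto
  show "\<forall>S\<in>Pow N. w S = u_fn N v i S - u_fn N v i {}"
  proof
    fix S assume "S \<in> Pow N"
    then have "w S - u_fn N v i S = w {} - u_fn N v i {}"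
      using orthogonal_residuals_imp_diff_const[of N "grad_i i v" w "u_fn N v i" S]
        assms(1) w(2) u_fn_residual_orthogonal[OF assms(1,3)] by blast
    then show "w S = u_fn N v i S - u_fn N v i {}" using w(1) by simp
  qed
next
  have "symdiff {} T = T" for T :: "'a set" unfolding symdiff_def by simp
  then show "u_fn N v i {} =
           - (1 / (real (card N) * 2 ^ card N) *
              (\<Sum>T\<in>Pow (N - {i}).
                 (\<Sum>k = card T + 1..card N. real (card N choose k))
                   / real ((card N - 1) choose card T)
                 * (v (insert i T) - v T)))"
    unfolding u_fn_def u_top_def by simp
qed

end
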